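(* Let $\mathbb{X},\mathbb{Y},\mathbb{Z}$ be finite-dimensional real Euclidean spaces, $f_1:\mathbb{Y}\to(-\infty,+\infty]$ and $f_2:\mathbb{Z}\to(-\infty,+\infty]$ proper closed convex functions, $B_1:\mathbb{Y}\to\mathbb{X}$, $B_2:\mathbb{Z}\to\mathbb{X}$ linear, $c\in\mathbb{X}$, $\sigma>0$, and consider the problem $\min\{f_1(y)+f_2(z): B_1y+B_2z=c\}$ with augmented Lagrangian $L_\sigma(y,z;x)=f_1(y)+f_2(z)+\langle x,B_1y+B_2z-c\rangle+\frac{\sigma}{2}\|B_1y+B_2z-c\|^2$. Assume $\partial f_1+\sigma B_1^*B_1$ and $\partial f_2+\sigma B_2^*B_2$ are maximal and strongly monotone. Let $(y^0,z^0,x^0)\in\operatorname{dom}f_1\times\operatorname{dom}f_2\times\mathbb{X}$. Algorithm I (HPR without proximal terms): set $\tilde x^0=x^0$ and for $k\ge0$: $z^{k+1}=\arg\min_z L_\sigma(y^k,z;\tilde x^k)$; $x^{k+1/2}=\tilde x^k+\sigma(B_1y^k+B_2z^{k+1}-c)$; $y^{k+1}=\arg\min_y L_\sigma(y,z^{k+1};x^{k+1/2})$; $x^{k+1}=x^{k+1/2}+\sigma(B_1y^{k+1}+B_2z^{k+1}-c)$; $\tilde x^{k+1}=\frac{1}{k+2}\tilde x^0+\frac{k+1}{k+2}x^{k+1}+\frac{\sigma}{k+2}(B_1y^0-B_1y^{k+1})$. Algorithm II (Halpern accelerated pADMM without proximal terms): with $w^0=(y^0,z^0,x^0)$ and for $k\ge0$: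 $\bar z^{k+1}=\arg\min_z L_\sigma(y^k,z;x^k)$; $\bar x^{k+1}=x^k+\sigma(B_1y^k+B_2\bar z^{k+1}-c)$; $\bar y^{k+1}=\arg\min_y L_\sigma(y,\bar z^{k+1};\bar x^{k+1})$; $\hat w^{k+1}=2\bar w^{k+1}-w^k$; $w^{k+1}=\frac{1}{k+2}w^0+\frac{k+1}{k+2}\hat w^{k+1}$, where $w^k=(y^k,z^k,x^k)$ and $\bar w^{k+1}=(\bar y^{k+1},\bar z^{k+1},\bar x^{k+1})$. Then all subproblems in both algorithms have unique solutions, and for every $k\ge0$, $(y^{k+1},z^{k+1},x^{k+1/2})$ (from Algorithm I) equals $(\bar y^{k+1},\bar z^{k+1},\bar x^{k+1})$ (from Algorithm II), both started from the same $(y^0,x^0)$. *)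

theory Defs
  imports "HOL-Analysis.Analysis" "HOL-Library.Extended_Real"
begin

definition proper_fun :: "('a \<Rightarrow> ereal) \<Rightarrow> bool" where
  "proper_fun f \<longleftrightarrow> (\<forall>x. f x \<noteq> -\<infinity>) \<and> (\<exists>x. f x \<noteq> \<infinity>)"

definition epigraph :: "('a \<Rightarrow> ereal) \<Rightarrow> ('a \<times> real) set" where
  "epigraph f = {(x, t). f x \<le> ereal t}"

definition convex_fun :: "('a::real_vector \<Rightarrow> ereal) \<Rightarrow> bool" where
  "convex_fun f \<longleftrightarrow> convex (epigraph f)"

definition closed_fun :: "('a::topological_space \<Rightarrow> ereal) \<Rightarrow> bool" where
  "closed_fun f \<longleftrightarrow> closed (epigraph f)"

definition effdom :: "('a \<Rightarrow> ereal) \<Rightarrow> 'a set" where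
  "effdom f = {x. f x < \<infinity>}"

definition subdiff :: "('a::real_inner \<Rightarrow> ereal) \<Rightarrow> 'a \<Rightarrow> 'a set" where
  "subdiff f x = {g. f x \<noteq> \<infinity> \<and> (\<forall>u. f u \<ge> f x + ereal (g \<bullet> (u - x)))}"

definition monotone_op :: "('a::real_inner \<Rightarrow> 'a set) \<Rightarrow> bool" where
  "monotone_op T \<longleftrightarrow> (\<forall>u v g h. g \<in> T u \<longrightarrow> h \<in> T v \<longrightarrow> (g - h) \<bullet> (u - v) \<ge> 0)"

definition maximal_monotone :: "('a::real_inner \<Rightarrow> 'a set) \<Rightarrow> bool" where
  "maximal_monotone T \<longleftrightarrow> monotone_op T \<and>
     (\<forall>S. monotone_op S \<and> (\<forall>u. T u \<subseteq> S u) \<longrightarrow> S = T)"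

definition strongly_monotone :: "('a::real_inner \<Rightarrow> 'a set) \<Rightarrow> bool" where
  "strongly_monotone T \<longleftrightarrow> (\<exists>\<mu>>0. \<forall>u v g h. g \<in> T u \<longrightarrow> h \<in> T v \<longrightarrow>
      (g - h) \<bullet> (u - v) \<ge> \<mu> * (norm (u - v))\<^sup>2)"

definition subdiff_plus_BB :: "('a::real_inner \<Rightarrow> ereal) \<Rightarrow> real \<Rightarrow> ('a \<Rightarrow> 'b::real_inner) \<Rightarrow> 'a \<Rightarrow> 'a set" where
  "subdiff_plus_BB f \<sigma> B y = (\<lambda>g. g + \<sigma> *\<^sub>R adjoint B (B y)) ` subdiff f y"

definition aug_lagr ::
  "('y \<Rightarrow> ereal) \<Rightarrow> ('z \<Rightarrow> ereal) \<Rightarrow> ('y \<Rightarrow> 'x::real_inner) \<Rightarrow> ('z \<Rightarrow> 'x) \<Rightarrow> 'x \<Rightarrow> real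
    \<Rightarrow> 'y \<Rightarrow> 'z \<Rightarrow> 'x \<Rightarrow> ereal" where
  "aug_lagr f1 f2 B1 B2 c \<sigma> y z x =
     f1 y + f2 z + ereal (x \<bullet> (B1 y + B2 z - c) + \<sigma> / 2 * (norm (B1 y + B2 z - c))\<^sup>2)"

text \<open>z-subproblem argmin_z L_\<sigma>(y,z;x): since f1(y) is a constant in z (possibly +\<infinity>
  for extrapolated iterates), it is dropped, as is standard.\<close>
definition is_zsub_min ::
  "('z \<Rightarrow> ereal) \<Rightarrow> ('y \<Rightarrow> 'x::real_inner) \<Rightarrow> ('z \<Rightarrow> 'x) \<Rightarrow> 'x \<Rightarrow> real \<Rightarrow> 'y \<Rightarrow> 'x \<Rightarrow> 'z \<Rightarrow> bool" where
  "is_zsub_min f2 B1 B2 c \<sigma> y x z \<longleftrightarrow>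
     (\<forall>z'. f2 z + ereal (x \<bullet> (B1 y + B2 z - c) + \<sigma> / 2 * (norm (B1 y + B2 z - c))\<^sup>2)
         \<le> f2 z' + ereal (x \<bullet> (B1 y + B2 z' - c) + \<sigma> / 2 * (norm (B1 y + B2 z' - c))\<^sup>2))"

text \<open>y-subproblem argmin_y L_\<sigma>(y,z;x), with the constant f2(z) dropped.\<close>
definition is_ysub_min ::
  "('y \<Rightarrow> ereal) \<Rightarrow> ('y \<Rightarrow> 'x::real_inner) \<Rightarrow> ('z \<Rightarrow> 'x) \<Rightarrow> 'x \<Rightarrow> real \<Rightarrow> 'z \<Rightarrow> 'x \<Rightarrow> 'y \<Rightarrow> bool" where
  "is_ysub_min f1 B1 B2 c \<sigma> z x y \<longleftrightarrow>
     (\<forall>y'. f1 y + ereal (x \<bullet> (B1 y + B2 z - c) + \<sigma> / 2 * (norm (B1 y + B2 z - c))\<^sup>2)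
         \<le> f1 y' + ereal (x \<bullet> (B1 y' + B2 z - c) + \<sigma> / 2 * (norm (B1 y' + B2 z - c))\<^sup>2))"

end

theory Submission
  imports Defs
begin

text \<open>Each subproblem minimizes f v + \<langle>x, B v + e\<rangle> + \<sigma>/2 \<parallel>B v + e\<parallel>^2, whose minimizers are
  the solutions of -B'(x + \<sigma> e) \<in> \<partial>f v + \<sigma> B'B v, with B' the adjoint of B. The maximal strongly
  monotone operator \<partial>f + \<sigma> B'B is surjective: its Tikhonov regularizations are solved by
  minimizing coercive closed functions, these solutions stay bounded by strong monotonicity, and a
  limit point solves the original inclusion by maximality. Strong monotonicity also gives uniqueness.

  The z-subproblem depends on (y, x) only through the shifted multiplier x + \<sigma> B1 y, and by
  induction this quantity agrees in the two algorithms: in Algorithm I,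
  x^(k+1) + \<sigma> B1 y^(k+1) = 2 (x^(k+1/2) + \<sigma> B1 y^(k+1)) - (x~^k + \<sigma> B1 y^k)
  is the reflection that Algorithm II performs, and the Halpern averaging commutes with
  (x, y) \<mapsto> x + \<sigma> B1 y.\<close>

lemma norm_add_scaleR_power2:
  fixes a b :: "'a::real_inner"
  shows "(norm (a + s *\<^sub>R b))\<^sup>2 = (norm a)\<^sup>2 + 2 * s * (a \<bullet> b) + s\<^sup>2 * (norm b)\<^sup>2"
  unfolding power2_norm_eq_inner
  by (simp add: inner_add_left inner_add_right inner_commute algebra_simps power2_eq_square)

lemma convex_funD:
  fixes f :: "'a::real_vector \<Rightarrow> ereal"
  assumes "convex_fun f" "f a = ereal A" "f b = ereal B" "0 \<le> s" "s \<le> 1"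
  shows "f ((1 - s) *\<^sub>R a + s *\<^sub>R b) \<le> ereal ((1 - s) * A + s * B)"
proof -
  have "(a, A) \<in> epigraph f" "(b, B) \<in> epigraph f"
    using assms by (auto simp: epigraph_def)
  then have "(1 - s) *\<^sub>R (a, A) + s *\<^sub>R (b, B) \<in> epigraph f"
    using assms convexD[of "epigraph f"] unfolding convex_fun_def by auto
  then show ?thesis
    by (simp add: epigraph_def)
qed

lemma nonneg_if_nonneg_plus_small_multiples:
  fixes E K :: real
  assumes "\<And>s. 0 < s \<Longrightarrow> s \<le> 1 \<Longrightarrow> 0 \<le> E + s * K"
  shows "0 \<le> E"
proof (rule tendsto_lowerbound)
  show "((\<lambda>s. E + s * K) \<longlongrightarrow> E) (at_right 0)"
    by (auto intro!: tendsto_eq_intros)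
  show "\<forall>\<^sub>F s in at_right 0. 0 \<le> E + s * K"
    using eventually_at_right_real[OF zero_less_one] by eventually_elim (use assms in auto)
qed simp

lemma neg_gradient_in_subdiff_if_minimizer:
  fixes f :: "'a::real_inner \<Rightarrow> ereal"
  assumes cf: "convex_fun f" and fz: "f z = ereal a"
    and minimal: "\<And>u. f z + ereal (q z) \<le> f u + ereal (q u)"
    and expansion: "\<And>d s. q (z + s *\<^sub>R d) = q z + s * (v \<bullet> d) + s\<^sup>2 * K d"
  shows "- v \<in> subdiff f z"
  unfolding subdiff_def
proof (intro CollectI conjI allI)
  show "f z \<noteq> \<infinity>"
    using fz by simp
  fix u
  show "f z + ereal (- v \<bullet> (u - z)) \<le> f u"
  proof (cases "f u")
    case (real b)
    define d where "d = u - z"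
    have "0 \<le> (b - a + v \<bullet> d) + s * K d" if s: "0 < s" "s \<le> 1" for s
    proof -
      have "(1 - s) *\<^sub>R z + s *\<^sub>R u = z + s *\<^sub>R d"
        by (simp add: d_def algebra_simps)
      then have "f (z + s *\<^sub>R d) \<le> ereal ((1 - s) * a + s * b)"
        using convex_funD[OF cf fz real, of s] s by simp
      then have "ereal (a + q z) \<le> ereal ((1 - s) * a + s * b + q (z + s *\<^sub>R d))"
        using minimal[of "z + s *\<^sub>R d"] fz
        by (metis add_right_mono order_trans plus_ereal.simps(1))
      then have "0 \<le> s * ((b - a + v \<bullet> d) + s * K d)"
        by (simp add: expansion algebra_simps power2_eq_square)
      then show ?thesis
        using s by (simp add: zero_le_mult_iff)
    qed
    then have "0 \<le> b - a + v \<bullet> d"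
      by (rule nonneg_if_nonneg_plus_small_multiples)
    then show ?thesis
      using fz real by (simp add: d_def inner_diff_right)
  qed (use minimal[of u] fz in auto)
qed

lemma quadratic_eventually_gt:
  fixes l m M :: real
  assumes "0 < l"
  shows "\<exists>R. \<forall>r>R. M < l * r\<^sup>2 - m * r"
proof (intro exI allI impI)
  fix r
  assume r: "max 1 ((\<bar>M\<bar> + \<bar>m\<bar>) / l) < r"
  then have "\<bar>M\<bar> + \<bar>m\<bar> < l * r"
    using assms by (simp add: pos_divide_less_eq mult.commute)
  then have "(\<bar>M\<bar> + \<bar>m\<bar>) * r < l * r * r"
    using r by (intro mult_strict_right_mono) auto
  moreover have "\<bar>M\<bar> \<le> \<bar>M\<bar> * r" "m * r \<le> \<bar>m\<bar> * r"
    using r by (auto intro: mult_right_mono simp: mult_le_cancel_left1)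
  ultimately show "M < l * r\<^sup>2 - m * r"
    by (simp add: power2_eq_square algebra_simps)
qed

lemma closed_fun_plus_continuous_attains_min_on_cball:
  fixes f :: "'a::euclidean_space \<Rightarrow> ereal" and h :: "'a \<Rightarrow> real"
  assumes cl: "closed_fun f" and hc: "continuous_on UNIV h"
    and u0R: "norm u0 \<le> R" and fu0: "f u0 = ereal a0"
    and bounded_below: "\<And>z. norm z \<le> R \<Longrightarrow> ereal L \<le> f z"
  shows "\<exists>zb. norm zb \<le> R \<and> (\<forall>z. norm z \<le> R \<longrightarrow> f zb + ereal (h zb) \<le> f z + ereal (h z))"
proof -
  define M where "M = a0 + h u0"
  obtain zm where "\<And>z. z \<in> cball 0 R \<Longrightarrow> h zm \<le> h z"
    using continuous_attains_inf[of "cball 0 R" h] hc u0R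
    by (metis compact_cball continuous_on_subset empty_iff mem_cball_0 subset_UNIV)
  then have h_lower: "norm z \<le> R \<Longrightarrow> h zm \<le> h z" for z
    by simp
  \<comment> \<open>The part of the epigraph of f that can contain a minimizer of f + h is compact.\<close>
  define E where "E = epigraph f \<inter> (cball 0 R \<times> {L..M - h zm})"
  have "compact E"
    using cl unfolding E_def closed_fun_def
    by (intro closed_Int_compact compact_Times compact_cball compact_Icc)
  moreover have u0E: "(u0, a0) \<in> E"
    using u0R bounded_below[OF u0R] h_lower[OF u0R] fu0 by (auto simp: E_def epigraph_def M_def)
  moreover have "continuous_on E (\<lambda>p. snd p + h (fst p))"
    by (intro continuous_intros continuous_on_compose2[OF hc]) auto
  ultimately obtain zb tb where "(zb, tb) \<in> E" and tb_min: "\<And>z t. (z, t) \<in> E \<Longrightarrow> tb + h zb \<le> t + h z"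
    using continuous_attains_inf[of E "\<lambda>p. snd p + h (fst p)"] by fastforce
  then have zbR: "norm zb \<le> R" and "f zb \<le> ereal tb"
    by (simp_all add: E_def epigraph_def)
  then have fzb: "f zb + ereal (h zb) \<le> ereal (tb + h zb)"
    by (metis add_right_mono plus_ereal.simps(1))
  have tbM: "tb + h zb \<le> M"
    using tb_min[OF u0E] by (simp add: M_def)
  have "f zb + ereal (h zb) \<le> f z + ereal (h z)" if zR: "norm z \<le> R" for z
  proof (cases "f z")
    case (real t)
    have "tb + h zb \<le> t + h z"
    proof (cases "t \<le> M - h zm")
      case True
      moreover have "L \<le> t"
        using bounded_below[OF zR] real by simp
      ultimately have "(z, t) \<in> E"
        using zR real by (simp add: E_def epigraph_def)
      then show ?thesis
        by (rule tb_min)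
    next
      case False
      then show ?thesis
        using h_lower[OF zR] tbM by linarith
    qed
    with real have "ereal (tb + h zb) \<le> f z + ereal (h z)"
      by simp
    with fzb show ?thesis
      by (rule order_trans)
  qed (use bounded_below[OF zR] in auto)
  with zbR show ?thesis
    by blast
qed

lemma closed_fun_plus_coercive_attains_min:
  fixes f :: "'a::euclidean_space \<Rightarrow> ereal" and h :: "'a \<Rightarrow> real"
  assumes cl: "closed_fun f" and fu0: "f u0 = ereal a0"
    and minorant: "\<And>z. ereal (b + s \<bullet> z) \<le> f z"
    and hc: "continuous_on UNIV h" and l: "0 < l"
    and growth: "\<And>z. l * (norm z)\<^sup>2 - m * norm z \<le> h z"
  shows "\<exists>zb. \<forall>z. f zb + ereal (h zb) \<le> f z + ereal (h z)"
proof -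
  obtain R0 where R0: "\<And>r. R0 < r \<Longrightarrow> a0 + h u0 - b < l * r\<^sup>2 - (norm s + m) * r"
    using quadratic_eventually_gt[OF l] by blast
  define R where "R = max R0 (norm u0)"
  have minorant_norm: "b - norm s * norm z \<le> b + s \<bullet> z" for z :: 'a
    using Cauchy_Schwarz_ineq2[of s z] by linarith
  have bounded_below: "ereal (b - norm s * R) \<le> f z" if "norm z \<le> R" for z
  proof -
    have "b - norm s * R \<le> b + s \<bullet> z"
      using that minorant_norm[of z] mult_left_mono[of "norm z" R "norm s"] by simp
    then show ?thesis
      using minorant[of z] by (metis ereal_less_eq(3) order_trans)
  qed
  have "norm u0 \<le> R"
    by (simp add: R_def)
  then obtain zb where zb_min: "\<And>z. norm z \<le> R \<Longrightarrow> f zb + ereal (h zb) \<le> f z + ereal (h z)"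
    using closed_fun_plus_continuous_attains_min_on_cball[OF cl hc _ fu0 bounded_below] by blast
  have "f zb + ereal (h zb) \<le> f z + ereal (h z)" for z
  proof (cases "norm z \<le> R")
    case False
    then have "a0 + h u0 - b < l * (norm z)\<^sup>2 - (norm s + m) * norm z"
      by (intro R0) (simp add: R_def)
    then have "ereal (a0 + h u0) < ereal (b + s \<bullet> z) + ereal (h z)"
      using minorant_norm[of z] growth[of z] by (simp add: algebra_simps)
    also have "\<dots> \<le> f z + ereal (h z)"
      using minorant by (rule add_right_mono)
    finally have "f u0 + ereal (h u0) \<le> f z + ereal (h z)"
      using fu0 by simp
    moreover have "f zb + ereal (h zb) \<le> f u0 + ereal (h u0)"
      by (rule zb_min) (simp add: R_def)
    ultimately show ?thesis
      by (rule order_trans[rotated])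
  qed (rule zb_min)
  then show ?thesis
    by blast
qed

lemma maximal_monotone_ex_mem:
  assumes "maximal_monotone T"
  shows "\<exists>u g. g \<in> T u"
proof (rule ccontr)
  assume "\<nexists>u g. g \<in> T u"
  then have "\<forall>u. T u \<subseteq> (\<lambda>u. if u = 0 then {0} else {}) u"
    by blast
  moreover have "monotone_op (\<lambda>u. if u = 0 then {0} else {})"
    by (simp add: monotone_op_def)
  ultimately have "T = (\<lambda>u. if u = 0 then {0} else {})"
    using assms unfolding maximal_monotone_def by blast
  with \<open>\<nexists>u g. g \<in> T u\<close> show False
    by (metis singletonI)
qed

lemma maximal_monotone_memI:
  assumes mm: "maximal_monotone T"
    and w: "\<And>u g. g \<in> T u \<Longrightarrow> 0 \<le> (g - w) \<bullet> (u - z)"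
  shows "w \<in> T z"
proof -
  define S where "S = T(z := insert w (T z))"
  have S: "g \<in> S u \<longleftrightarrow> g \<in> T u \<or> (u = z \<and> g = w)" for u g
    by (auto simp: S_def)
  have swap: "(g - k) \<bullet> (u - v) = (k - g) \<bullet> (v - u)" for g k u v :: 'a
    by (simp add: inner_diff_left inner_diff_right)
  have monoT: "0 \<le> (g - k) \<bullet> (u - v)" if "g \<in> T u" "k \<in> T v" for g k u v
    using mm that by (simp add: maximal_monotone_def monotone_op_def)
  have "monotone_op S"
    unfolding monotone_op_def
  proof (intro allI impI)
    fix u v g k
    assume "g \<in> S u" "k \<in> S v"
    then consider "g \<in> T u" "k \<in> T v" | "g \<in> T u" "v = z" "k = w" | "u = z" "g = w" "k \<in> T v"
      | "u = z" "g = w" "v = z" "k = w"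
      using S by blast
    then show "0 \<le> (g - k) \<bullet> (u - v)"
      by cases (use monoT w swap in auto)
  qed
  moreover have "\<forall>u. T u \<subseteq> S u"
    using S by blast
  ultimately have "S = T"
    using mm by (simp add: maximal_monotone_def)
  then show ?thesis
    using S by metis
qed

lemma strongly_monotone_eq:
  assumes "strongly_monotone T" "g \<in> T u" "g \<in> T v"
  shows "u = v"
proof -
  obtain \<mu> where "0 < \<mu>" "\<mu> * (norm (u - v))\<^sup>2 \<le> (g - g) \<bullet> (u - v)"
    using assms unfolding strongly_monotone_def by blast
  then show ?thesis
    by (simp add: mult_le_0_iff)
qed

lemma strongly_monotone_regularized_bounded:
  fixes T :: "'a::real_inner \<Rightarrow> 'a set"
  assumes sm: "\<And>u v g h. g \<in> T u \<Longrightarrow> h \<in> T v \<Longrightarrow> \<mu> * (norm (u - v))\<^sup>2 \<le> (g - h) \<bullet> (u - v)"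
    and mu: "0 < \<mu>" and g0: "g0 \<in> T u0" and z: "w - l *\<^sub>R z \<in> T z" and l: "0 \<le> l" "l \<le> 1"
  shows "norm (z - u0) \<le> (norm (w - g0) + norm u0) / \<mu>"
proof -
  define d where "d = z - u0"
  define C where "C = norm (w - g0) + norm u0"
  have "\<mu> * (norm d)\<^sup>2 \<le> (w - l *\<^sub>R z - g0) \<bullet> d"
    using sm[OF z g0] by (simp add: d_def)
  also have "\<dots> = (w - g0 - l *\<^sub>R u0) \<bullet> d - l * (d \<bullet> d)"
    by (simp add: d_def algebra_simps inner_diff_left inner_diff_right)
  also have "\<dots> \<le> (w - g0 - l *\<^sub>R u0) \<bullet> d"
    using l by simp
  also have "\<dots> \<le> norm (w - g0 - l *\<^sub>R u0) * norm d"
    by (rule norm_cauchy_schwarz)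
  also have "\<dots> \<le> C * norm d"
  proof (rule mult_right_mono)
    have "norm (l *\<^sub>R u0) \<le> norm u0"
      using l by (simp add: mult_left_le_one_le)
    then show "norm (w - g0 - l *\<^sub>R u0) \<le> C"
      unfolding C_def using norm_triangle_ineq4[of "w - g0" "l *\<^sub>R u0"] by linarith
  qed simp
  finally have "\<mu> * norm d \<le> C \<or> norm d = 0"
    by (auto simp: power2_eq_square)
  then show ?thesis
    using mu by (auto simp: d_def C_def field_simps)
qed

lemma maximal_strongly_monotone_surj:
  fixes T :: "'a::euclidean_space \<Rightarrow> 'a set"
  assumes mm: "maximal_monotone T" and sm: "strongly_monotone T"
    and regularized: "\<And>l w. 0 < l \<Longrightarrow> \<exists>z. w - l *\<^sub>R z \<in> T z"
  shows "\<exists>z. w \<in> T z"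
proof -
  obtain \<mu> where mu: "0 < \<mu>" and smu: "\<And>u v g h. g \<in> T u \<Longrightarrow> h \<in> T v \<Longrightarrow>
      \<mu> * (norm (u - v))\<^sup>2 \<le> (g - h) \<bullet> (u - v)"
    using sm unfolding strongly_monotone_def by blast
  obtain u0 g0 where g0: "g0 \<in> T u0"
    using maximal_monotone_ex_mem[OF mm] by blast
  define lam where "lam n = inverse (real (Suc n))" for n
  have lam: "0 < lam n" "lam n \<le> 1" for n
    by (auto simp: lam_def field_simps)
  obtain zs where zs: "\<And>n. w - lam n *\<^sub>R zs n \<in> T (zs n)"
    using regularized[OF lam(1)] by metis
  have "range zs \<subseteq> cball u0 ((norm (w - g0) + norm u0) / \<mu>)"
    using strongly_monotone_regularized_bounded[OF smu mu g0 zs] lam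
    by (auto simp: dist_norm norm_minus_commute less_imp_le)
  then have "bounded (range zs)"
    using bounded_cball bounded_subset by blast
  then obtain zl r where r: "strict_mono r" and lim: "(zs \<circ> r) \<longlonglongrightarrow> zl"
    using bounded_imp_convergent_subsequence by blast
  have lam_lim: "(lam \<circ> r) \<longlonglongrightarrow> 0"
    using LIMSEQ_subseq_LIMSEQ[OF LIMSEQ_inverse_real_of_nat r] by (simp add: lam_def comp_def)
  have "w \<in> T zl"
  proof (rule maximal_monotone_memI[OF mm])
    fix u g
    assume g: "g \<in> T u"
    have "(\<lambda>n. (g - (w - (lam \<circ> r) n *\<^sub>R (zs \<circ> r) n)) \<bullet> (u - (zs \<circ> r) n))
        \<longlonglongrightarrow> (g - (w - 0 *\<^sub>R zl)) \<bullet> (u - zl)"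
      by (intro tendsto_intros lam_lim lim)
    moreover have "0 \<le> (g - (w - (lam \<circ> r) n *\<^sub>R (zs \<circ> r) n)) \<bullet> (u - (zs \<circ> r) n)" for n
      using mm g zs unfolding maximal_monotone_def monotone_op_def by simp
    ultimately show "0 \<le> (g - w) \<bullet> (u - zl)"
      using LIMSEQ_le_const by fastforce
  qed
  then show ?thesis
    by blast
qed

lemma mem_subdiff_plus_BB_iff:
  "g \<in> subdiff_plus_BB f \<sigma> B v \<longleftrightarrow> g - \<sigma> *\<^sub>R adjoint B (B v) \<in> subdiff f v"
  unfolding subdiff_plus_BB_def by (auto intro: rev_image_eqI[of "g - \<sigma> *\<^sub>R adjoint B (B v)"])

lemma subdiff_plus_BB_regularized_surj:
  fixes f :: "'a::euclidean_space \<Rightarrow> ereal" and B :: "'a \<Rightarrow> 'b::euclidean_space"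
  assumes pf: "proper_fun f" and cf: "convex_fun f" and clf: "closed_fun f" and lin: "linear B"
    and sig: "0 \<le> \<sigma>" and s0: "s0 \<in> subdiff f u0" and l: "0 < l"
  shows "\<exists>z. w - l *\<^sub>R z \<in> subdiff_plus_BB f \<sigma> B z"
proof -
  have "f u0 \<noteq> \<infinity>" "f u0 \<noteq> - \<infinity>"
    using s0 pf by (auto simp: subdiff_def proper_fun_def)
  then obtain a0 where fu0: "f u0 = ereal a0"
    by (cases "f u0") auto
  have minorant: "ereal ((a0 - s0 \<bullet> u0) + s0 \<bullet> z) \<le> f z" for z
    using s0 fu0 by (simp add: subdiff_def inner_diff_right add_diff_eq diff_add_eq)
  define h where "h z = \<sigma> / 2 * (norm (B z))\<^sup>2 - w \<bullet> z + l / 2 * (norm z)\<^sup>2" for z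
  have growth: "l / 2 * (norm z)\<^sup>2 - norm w * norm z \<le> h z" for z
    using norm_cauchy_schwarz[of w z] mult_nonneg_nonneg[OF sig zero_le_power2[of "norm (B z)"]]
    by (simp add: h_def)
  have B_cont: "continuous_on UNIV B"
    using lin by (simp add: linear_continuous_on linear_conv_bounded_linear)
  have "continuous_on UNIV h"
    unfolding h_def by (intro continuous_intros continuous_on_compose2[OF B_cont]) auto
  then obtain zb where zb: "\<And>z. f zb + ereal (h zb) \<le> f z + ereal (h z)"
    using closed_fun_plus_coercive_attains_min[OF clf fu0 minorant _ half_gt_zero[OF l] growth] by blast
  have "f zb \<noteq> \<infinity>" "f zb \<noteq> - \<infinity>"
    using zb[of u0] fu0 minorant[of zb] by auto
  then obtain a where fzb: "f zb = ereal a"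
    by (cases "f zb") auto
  define v where "v = \<sigma> *\<^sub>R adjoint B (B zb) - w + l *\<^sub>R zb"
  have "h (zb + s *\<^sub>R d) = h zb + s * (v \<bullet> d) + s\<^sup>2 * (\<sigma> / 2 * (norm (B d))\<^sup>2 + l / 2 * (norm d)\<^sup>2)"
    for d s
  proof -
    have B_shift: "B (zb + s *\<^sub>R d) = B zb + s *\<^sub>R B d"
      by (simp add: linear_add[OF lin] linear_scale[OF lin])
    have v_inner: "v \<bullet> d = \<sigma> * (B zb \<bullet> B d) - w \<bullet> d + l * (zb \<bullet> d)"
      by (simp add: v_def inner_diff_left inner_add_left adjoint_clauses(2)[OF lin])
    show ?thesis
      unfolding h_def B_shift v_inner by (simp add: norm_add_scaleR_power2 inner_add_right algebra_simps)
  qed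
  then have "- v \<in> subdiff f zb"
    by (rule neg_gradient_in_subdiff_if_minimizer[OF cf fzb zb])
  moreover have "w - l *\<^sub>R zb - \<sigma> *\<^sub>R adjoint B (B zb) = - v"
    by (simp add: v_def)
  ultimately have "w - l *\<^sub>R zb \<in> subdiff_plus_BB f \<sigma> B zb"
    by (simp add: mem_subdiff_plus_BB_iff)
  then show ?thesis
    by blast
qed

lemma subdiff_plus_BB_surj:
  fixes f :: "'a::euclidean_space \<Rightarrow> ereal" and B :: "'a \<Rightarrow> 'b::euclidean_space"
  assumes pf: "proper_fun f" and cf: "convex_fun f" and clf: "closed_fun f" and lin: "linear B"
    and sig: "0 \<le> \<sigma>" and mm: "maximal_monotone (subdiff_plus_BB f \<sigma> B)"
    and sm: "strongly_monotone (subdiff_plus_BB f \<sigma> B)"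
  shows "\<exists>z. w \<in> subdiff_plus_BB f \<sigma> B z"
proof (rule maximal_strongly_monotone_surj[OF mm sm])
  obtain u0 g0 where "g0 \<in> subdiff_plus_BB f \<sigma> B u0"
    using maximal_monotone_ex_mem[OF mm] by blast
  then obtain s0 where s0: "s0 \<in> subdiff f u0"
    by (auto simp: mem_subdiff_plus_BB_iff)
  show "\<exists>z. w' - l *\<^sub>R z \<in> subdiff_plus_BB f \<sigma> B z" if "0 < l" for l w'
    by (rule subdiff_plus_BB_regularized_surj[OF pf cf clf lin sig s0 that])
qed

lemma penalty_expansion:
  fixes B :: "'a::euclidean_space \<Rightarrow> 'b::euclidean_space"
  assumes lin: "linear B"
  shows "x \<bullet> (B (v + s *\<^sub>R d) + e) + \<sigma> / 2 * (norm (B (v + s *\<^sub>R d) + e))\<^sup>2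
    = x \<bullet> (B v + e) + \<sigma> / 2 * (norm (B v + e))\<^sup>2
      + s * (adjoint B (x + \<sigma> *\<^sub>R (B v + e)) \<bullet> d) + s\<^sup>2 * (\<sigma> / 2 * (norm (B d))\<^sup>2)"
proof -
  have shift: "B (v + s *\<^sub>R d) + e = (B v + e) + s *\<^sub>R B d"
    by (simp add: linear_add[OF lin] linear_scale[OF lin] algebra_simps)
  show ?thesis
    unfolding shift norm_add_scaleR_power2
    by (simp add: adjoint_clauses(2)[OF lin] inner_add_left inner_add_right algebra_simps)
qed

lemma subdiff_plus_BB_optimality:
  fixes f :: "'a::euclidean_space \<Rightarrow> ereal" and B :: "'a \<Rightarrow> 'b::euclidean_space"
  assumes pf: "proper_fun f" and cf: "convex_fun f" and lin: "linear B" and sig: "0 \<le> \<sigma>"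
  shows "(\<forall>u. f v + ereal (x \<bullet> (B v + e) + \<sigma> / 2 * (norm (B v + e))\<^sup>2)
                \<le> f u + ereal (x \<bullet> (B u + e) + \<sigma> / 2 * (norm (B u + e))\<^sup>2))
    \<longleftrightarrow> - adjoint B (x + \<sigma> *\<^sub>R e) \<in> subdiff_plus_BB f \<sigma> B v"
    (is "(\<forall>u. f v + ereal (?A v) \<le> f u + ereal (?A u)) \<longleftrightarrow> _")
proof -
  define g where "g = adjoint B (x + \<sigma> *\<^sub>R (B v + e))"
  have "- adjoint B (x + \<sigma> *\<^sub>R e) - \<sigma> *\<^sub>R adjoint B (B v) = - g"
    by (simp add: g_def adjoint_linear[OF lin] linear_add linear_scale algebra_simps)
  then have inclusion: "- adjoint B (x + \<sigma> *\<^sub>R e) \<in> subdiff_plus_BB f \<sigma> B v \<longleftrightarrow> - g \<in> subdiff f v"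
    by (simp add: mem_subdiff_plus_BB_iff)
  have expansion: "?A (v + s *\<^sub>R d) = ?A v + s * (g \<bullet> d) + s\<^sup>2 * (\<sigma> / 2 * (norm (B d))\<^sup>2)" for s d
    unfolding g_def by (rule penalty_expansion[OF lin])
  show ?thesis
    unfolding inclusion
  proof
    assume minimal: "\<forall>u. f v + ereal (?A v) \<le> f u + ereal (?A u)"
    obtain u where "f u \<noteq> \<infinity>"
      using pf by (auto simp: proper_fun_def)
    moreover have "f v + ereal (?A v) \<le> f u + ereal (?A u)"
      using minimal by blast
    ultimately have "f v \<noteq> \<infinity>"
      by auto
    then obtain a where fv: "f v = ereal a"
      using pf by (cases "f v") (auto simp: proper_fun_def)
    show "- g \<in> subdiff f v"
      by (rule neg_gradient_in_subdiff_if_minimizer[where q = ?A and K = "\<lambda>d. \<sigma> / 2 * (norm (B d))\<^sup>2",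
            OF cf fv]) (use minimal expansion in auto)
  next
    assume "- g \<in> subdiff f v"
    show "\<forall>u. f v + ereal (?A v) \<le> f u + ereal (?A u)"
    proof
      fix u
      have "?A u = ?A v + g \<bullet> (u - v) + \<sigma> / 2 * (norm (B (u - v)))\<^sup>2"
        using expansion[of 1 "u - v"] by simp
      then have "ereal (?A v) \<le> ereal (- g \<bullet> (u - v)) + ereal (?A u)"
        using sig by simp
      then have "f v + ereal (?A v) \<le> f v + ereal (- g \<bullet> (u - v)) + ereal (?A u)"
        using add_left_mono[of _ _ "f v"] by (simp add: add.assoc)
      also have "\<dots> \<le> f u + ereal (?A u)"
        using \<open>- g \<in> subdiff f v\<close> by (intro add_right_mono) (simp add: subdiff_def)
      finally show "f v + ereal (?A v) \<le> f u + ereal (?A u)" .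
    qed
  qed
qed

lemma subdiff_plus_BB_ex1_minimizer:
  fixes f :: "'a::euclidean_space \<Rightarrow> ereal" and B :: "'a \<Rightarrow> 'b::euclidean_space"
  assumes pf: "proper_fun f" and cf: "convex_fun f" and clf: "closed_fun f" and lin: "linear B"
    and sig: "0 < \<sigma>" and mm: "maximal_monotone (subdiff_plus_BB f \<sigma> B)"
    and sm: "strongly_monotone (subdiff_plus_BB f \<sigma> B)"
  shows "\<exists>!v. \<forall>v'. f v + ereal (x \<bullet> (B v + e) + \<sigma> / 2 * (norm (B v + e))\<^sup>2)
                 \<le> f v' + ereal (x \<bullet> (B v' + e) + \<sigma> / 2 * (norm (B v' + e))\<^sup>2)"
proof -
  obtain zs where "- adjoint B (x + \<sigma> *\<^sub>R e) \<in> subdiff_plus_BB f \<sigma> B zs"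
    using subdiff_plus_BB_surj[OF pf cf clf lin less_imp_le[OF sig] mm sm] by blast
  then show ?thesis
    unfolding subdiff_plus_BB_optimality[OF pf cf lin less_imp_le[OF sig]]
    using strongly_monotone_eq[OF sm] by blast
qed

lemma is_zsub_min_shift:
  fixes B1 :: "'y \<Rightarrow> 'x::real_inner" and B2 :: "'z \<Rightarrow> 'x"
  assumes "x + \<sigma> *\<^sub>R B1 y = x' + \<sigma> *\<^sub>R B1 y'"
  shows "is_zsub_min f2 B1 B2 c \<sigma> y x z \<longleftrightarrow> is_zsub_min f2 B1 B2 c \<sigma> y' x' z"
proof -
  have expand: "x \<bullet> (B1 y + B2 z - c) + \<sigma> / 2 * (norm (B1 y + B2 z - c))\<^sup>2
      = (x \<bullet> (B1 y - c) + \<sigma> / 2 * (norm (B1 y - c))\<^sup>2)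
        + ((x + \<sigma> *\<^sub>R B1 y - \<sigma> *\<^sub>R c) \<bullet> B2 z + \<sigma> / 2 * (norm (B2 z))\<^sup>2)" for x y z
  proof -
    have split: "B1 y + B2 z - c = (B1 y - c) + 1 *\<^sub>R B2 z"
      by simp
    show ?thesis
      unfolding split norm_add_scaleR_power2
      by (simp add: inner_add_left inner_add_right inner_diff_left algebra_simps)
  qed
  have cancel: "p + ereal (K + a) \<le> q + ereal (K + b) \<longleftrightarrow> p + ereal a \<le> q + ereal b" for p q K a b
    by (cases p; cases q) auto
  show ?thesis
    unfolding is_zsub_min_def expand assms cancel ..
qed

lemma is_zsub_min_ex1:
  fixes f2 :: "'z::euclidean_space \<Rightarrow> ereal" and B1 :: "'y \<Rightarrow> 'x::euclidean_space" and B2 :: "'z \<Rightarrow> 'x"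
  assumes "proper_fun f2" "convex_fun f2" "closed_fun f2" "linear B2" "0 < \<sigma>"
    "maximal_monotone (subdiff_plus_BB f2 \<sigma> B2)" "strongly_monotone (subdiff_plus_BB f2 \<sigma> B2)"
  shows "\<exists>!z. is_zsub_min f2 B1 B2 c \<sigma> y x z"
proof -
  have residual: "B1 y + B2 z - c = B2 z + (B1 y - c)" for z
    by (simp add: algebra_simps)
  show ?thesis
    unfolding is_zsub_min_def residual by (rule subdiff_plus_BB_ex1_minimizer[OF assms])
qed

lemma is_ysub_min_ex1:
  fixes f1 :: "'y::euclidean_space \<Rightarrow> ereal" and B1 :: "'y \<Rightarrow> 'x::euclidean_space" and B2 :: "'z \<Rightarrow> 'x"
  assumes "proper_fun f1" "convex_fun f1" "closed_fun f1" "linear B1" "0 < \<sigma>"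
    "maximal_monotone (subdiff_plus_BB f1 \<sigma> B1)" "strongly_monotone (subdiff_plus_BB f1 \<sigma> B1)"
  shows "\<exists>!y. is_ysub_min f1 B1 B2 c \<sigma> z x y"
proof -
  have residual: "B1 y + B2 z - c = B1 y + (B2 z - c)" for y
    by (simp add: algebra_simps)
  show ?thesis
    unfolding is_ysub_min_def residual by (rule subdiff_plus_BB_ex1_minimizer[OF assms])
qed

lemma admm_steps_agree:
  fixes B1 :: "'y \<Rightarrow> 'x::real_inner" and B2 :: "'z \<Rightarrow> 'x"
  assumes unique_z: "\<And>yy xx. \<exists>!zz. is_zsub_min f2 B1 B2 c \<sigma> yy xx zz"
    and unique_y: "\<And>zz xx. \<exists>!yy. is_ysub_min f1 B1 B2 c \<sigma> zz xx yy"
    and shift: "x + \<sigma> *\<^sub>R B1 y = x' + \<sigma> *\<^sub>R B1 y'"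
    and z: "is_zsub_min f2 B1 B2 c \<sigma> y x zn" "is_zsub_min f2 B1 B2 c \<sigma> y' x' zn'"
    and xh: "xh = x + \<sigma> *\<^sub>R (B1 y + B2 zn - c)" "xh' = x' + \<sigma> *\<^sub>R (B1 y' + B2 zn' - c)"
    and y: "is_ysub_min f1 B1 B2 c \<sigma> zn xh yn" "is_ysub_min f1 B1 B2 c \<sigma> zn' xh' yn'"
  shows "zn = zn' \<and> xh = xh' \<and> yn = yn'"
proof -
  have "is_zsub_min f2 B1 B2 c \<sigma> y' x' zn"
    using z(1) by (rule is_zsub_min_shift[where x = x and y = y and x' = x' and y' = y', OF shift, THEN iffD1])
  then have zn: "zn = zn'"
    using unique_z[of y' x'] z(2) by blast
  have "xh = (x + \<sigma> *\<^sub>R B1 y) + \<sigma> *\<^sub>R (B2 zn - c)"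
    by (simp add: xh(1) algebra_simps)
  also have "\<dots> = (x' + \<sigma> *\<^sub>R B1 y') + \<sigma> *\<^sub>R (B2 zn' - c)"
    by (simp only: shift zn)
  also have "\<dots> = xh'"
    by (simp add: xh(2) algebra_simps)
  finally have "xh = xh'" .
  then show ?thesis
    using zn unique_y[of zn' xh'] y by blast
qed

lemma hpr_shifted_multiplier_step:
  fixes B :: "'y \<Rightarrow> 'x::real_vector" and C :: "'z \<Rightarrow> 'x"
  assumes xh: "xh = xt + \<sigma> *\<^sub>R (B y + C z - c)"
    and x': "x' = xh + \<sigma> *\<^sub>R (B y' + C z - c)"
    and xt': "xt' = p *\<^sub>R xt0 + (1 - p) *\<^sub>R x' + (\<sigma> * p) *\<^sub>R (B y0 - B y')"
  shows "xt' + \<sigma> *\<^sub>R B y'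
    = p *\<^sub>R (xt0 + \<sigma> *\<^sub>R B y0) + (1 - p) *\<^sub>R (2 *\<^sub>R (xh + \<sigma> *\<^sub>R B y') - (xt + \<sigma> *\<^sub>R B y))"
proof -
  have "x' + \<sigma> *\<^sub>R B y' = (xh + \<sigma> *\<^sub>R B y') + \<sigma> *\<^sub>R B y' + \<sigma> *\<^sub>R (C z - c)"
    by (simp add: x' algebra_simps)
  also have "\<sigma> *\<^sub>R (C z - c) = xh - (xt + \<sigma> *\<^sub>R B y)"
    by (simp add: xh algebra_simps)
  also have "(xh + \<sigma> *\<^sub>R B y') + \<sigma> *\<^sub>R B y' + (xh - (xt + \<sigma> *\<^sub>R B y))
      = 2 *\<^sub>R (xh + \<sigma> *\<^sub>R B y') - (xt + \<sigma> *\<^sub>R B y)"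
    unfolding scaleR_2 by (simp add: algebra_simps)
  finally have "x' + \<sigma> *\<^sub>R B y' = 2 *\<^sub>R (xh + \<sigma> *\<^sub>R B y') - (xt + \<sigma> *\<^sub>R B y)" .
  moreover have "xt' + \<sigma> *\<^sub>R B y' = p *\<^sub>R (xt0 + \<sigma> *\<^sub>R B y0) + (1 - p) *\<^sub>R (x' + \<sigma> *\<^sub>R B y')"
    by (simp add: xt' algebra_simps)
  ultimately show ?thesis
    by simp
qed

lemma halpern_shifted_multiplier_step:
  fixes B :: "'y::real_vector \<Rightarrow> 'x::real_vector"
  assumes lin: "linear B"
  shows "(p *\<^sub>R x0 + (1 - p) *\<^sub>R (2 *\<^sub>R x' - x)) + \<sigma> *\<^sub>R B (p *\<^sub>R y0 + (1 - p) *\<^sub>R (2 *\<^sub>R y' - y))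
    = p *\<^sub>R (x0 + \<sigma> *\<^sub>R B y0) + (1 - p) *\<^sub>R (2 *\<^sub>R (x' + \<sigma> *\<^sub>R B y') - (x + \<sigma> *\<^sub>R B y))"
  unfolding scaleR_2
  by (simp add: linear_add[OF lin] linear_diff[OF lin] linear_scale[OF lin] algebra_simps)

theorem propositionA1:
  fixes f1 :: "'y::euclidean_space \<Rightarrow> ereal" and f2 :: "'z::euclidean_space \<Rightarrow> ereal"
    and B1 :: "'y \<Rightarrow> 'x::euclidean_space" and B2 :: "'z \<Rightarrow> 'x"
    and c :: 'x and \<sigma> :: real
    and y0 :: 'y and z0 :: 'z and x0 :: 'x
    and y z :: "nat \<Rightarrow> _" and xh x xt :: "nat \<Rightarrow> 'x"
    and yb yw :: "nat \<Rightarrow> 'y" and zb zw :: "nat \<Rightarrow> 'z" and xb xw :: "nat \<Rightarrow> 'x"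
  assumes f1: "proper_fun f1" "convex_fun f1" "closed_fun f1"
    and f2: "proper_fun f2" "convex_fun f2" "closed_fun f2"
    and lin: "linear B1" "linear B2"
    and sig: "\<sigma> > 0"
    and T1: "maximal_monotone (subdiff_plus_BB f1 \<sigma> B1)" "strongly_monotone (subdiff_plus_BB f1 \<sigma> B1)"
    and T2: "maximal_monotone (subdiff_plus_BB f2 \<sigma> B2)" "strongly_monotone (subdiff_plus_BB f2 \<sigma> B2)"
    and init: "y0 \<in> effdom f1" "z0 \<in> effdom f2"
    \<comment> \<open>Algorithm I (HPR without proximal terms); xh k stands for x^{k+1/2}\<close>
    and I0: "y 0 = y0" "z 0 = z0" "x 0 = x0" "xt 0 = x0"
    and Iz: "\<And>k. is_zsub_min f2 B1 B2 c \<sigma> (y k) (xt k) (z (Suc k))"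
    and Ixh: "\<And>k. xh k = xt k + \<sigma> *\<^sub>R (B1 (y k) + B2 (z (Suc k)) - c)"
    and Iy: "\<And>k. is_ysub_min f1 B1 B2 c \<sigma> (z (Suc k)) (xh k) (y (Suc k))"
    and Ix: "\<And>k. x (Suc k) = xh k + \<sigma> *\<^sub>R (B1 (y (Suc k)) + B2 (z (Suc k)) - c)"
    and Ixt: "\<And>k. xt (Suc k) = (1 / (real k + 2)) *\<^sub>R xt 0 + ((real k + 1) / (real k + 2)) *\<^sub>R x (Suc k)
                 + (\<sigma> / (real k + 2)) *\<^sub>R (B1 (y 0) - B1 (y (Suc k)))"
    \<comment> \<open>Algorithm II (Halpern accelerated pADMM without proximal terms)\<close>
    and II0: "yw 0 = y0" "zw 0 = z0" "xw 0 = x0"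
    and IIz: "\<And>k. is_zsub_min f2 B1 B2 c \<sigma> (yw k) (xw k) (zb (Suc k))"
    and IIx: "\<And>k. xb (Suc k) = xw k + \<sigma> *\<^sub>R (B1 (yw k) + B2 (zb (Suc k)) - c)"
    and IIy: "\<And>k. is_ysub_min f1 B1 B2 c \<sigma> (zb (Suc k)) (xb (Suc k)) (yb (Suc k))"
    and IIw: "\<And>k. yw (Suc k) = (1 / (real k + 2)) *\<^sub>R yw 0 + ((real k + 1) / (real k + 2)) *\<^sub>R (2 *\<^sub>R yb (Suc k) - yw k)"
             "\<And>k. zw (Suc k) = (1 / (real k + 2)) *\<^sub>R zw 0 + ((real k + 1) / (real k + 2)) *\<^sub>R (2 *\<^sub>R zb (Suc k) - zw k)"
             "\<And>k. xw (Suc k) = (1 / (real k + 2)) *\<^sub>R xw 0 + ((real k + 1) / (real k + 2)) *\<^sub>R (2 *\<^sub>R xb (Suc k) - xw k)"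
  shows "(\<forall>yy xx. \<exists>!zz. is_zsub_min f2 B1 B2 c \<sigma> yy xx zz)
       \<and> (\<forall>zz xx. \<exists>!yy. is_ysub_min f1 B1 B2 c \<sigma> zz xx yy)
       \<and> (\<forall>k. y (Suc k) = yb (Suc k) \<and> z (Suc k) = zb (Suc k) \<and> xh k = xb (Suc k))"
proof -
  have unique_z: "\<exists>!zz. is_zsub_min f2 B1 B2 c \<sigma> yy xx zz" for yy xx
    by (rule is_zsub_min_ex1[OF f2 lin(2) sig T2])
  have unique_y: "\<exists>!yy. is_ysub_min f1 B1 B2 c \<sigma> zz xx yy" for zz xx
    by (rule is_ysub_min_ex1[OF f1 lin(1) sig T1])
  note agree = admm_steps_agree[OF unique_z unique_y _ Iz IIz Ixh IIx Iy IIy]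
  have shift: "xt k + \<sigma> *\<^sub>R B1 (y k) = xw k + \<sigma> *\<^sub>R B1 (yw k)" for k
  proof (induction k)
    case 0
    show ?case
      by (simp add: I0 II0)
  next
    case (Suc k)
    define p where "p = 1 / (real k + 2)"
    have coeffs: "(real k + 1) / (real k + 2) = 1 - p" "\<sigma> / (real k + 2) = \<sigma> * p"
      by (simp_all add: p_def field_simps)
    have "xt (Suc k) + \<sigma> *\<^sub>R B1 (y (Suc k)) = p *\<^sub>R (x0 + \<sigma> *\<^sub>R B1 y0)
        + (1 - p) *\<^sub>R (2 *\<^sub>R (xh k + \<sigma> *\<^sub>R B1 (y (Suc k))) - (xt k + \<sigma> *\<^sub>R B1 (y k)))"
      using hpr_shifted_multiplier_step[where B = B1 and C = B2, OF Ixh[of k] Ix[of k] Ixt[of k, unfolded coeffs p_def[symmetric]]]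
      by (simp add: I0)
    also have "\<dots> = p *\<^sub>R (x0 + \<sigma> *\<^sub>R B1 y0)
        + (1 - p) *\<^sub>R (2 *\<^sub>R (xb (Suc k) + \<sigma> *\<^sub>R B1 (yb (Suc k))) - (xw k + \<sigma> *\<^sub>R B1 (yw k)))"
      using agree[OF Suc.IH] Suc.IH by simp
    also have "\<dots> = xw (Suc k) + \<sigma> *\<^sub>R B1 (yw (Suc k))"
      unfolding IIw(1,3) coeffs p_def[symmetric] II0
      by (rule halpern_shifted_multiplier_step[OF lin(1), symmetric])
    finally show ?case .
  qed
  show ?thesis
    using unique_z unique_y agree[OF shift] by blast
qed

end
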